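(* For every positive integer $h$, there is a protocol solving MEQ-AD$(3,6^h)$ with communication complexity $h\log_2 27$; in particular $C_{AD}(3,6^h)\le h\log_2 27$.
   Context: There are $n$ nodes labeled $1,\dots,n$ (here $n=3$); node $i$ privately holds an input $x_i\in\{1,\dots,M\}$. Communication is over private point-to-point links of a fully connected synchronous network. A deterministic protocol $P$ is a fixed finite schedule of steps $l=1,\dots,L(P)$; in step $l$ a prescribed node $T_l$ sends to a prescribed node $R_l\neq T_l$ one symbol $f_l(x_{T_l},T_l^+(l))$, where $T_l^+(l)$ is the sequence of symbols $T_l$ has received in steps $1,\dots,l-1$; only $R_l$ receives it. Its complexity is $C(P)=\sum_{l}\log_2 S_l(P)$, with $S_l(P)$ the number of distinct values of the step-$l$ symbol over all inputs in $\{1,\dots,M\}^n$. At the end each node $i$ outputs a bit $EQ_i$ depending on $x_i$ and the symbols it received. $P$ solves MEQ-AD$(n,M)$ if for every input, $EQ_1=\cdots=EQ_n=0$ iff $x_1=\cdots=x_n$. $C_{AD}(n,M)$ is the infimum of $C(P)$ over protocols solving MEQ-AD$(n,M)$. *)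

theory Defs
  imports Complex_Main "HOL-Library.FuncSet"
begin

text \<open>A step is a triple (T, R, f): node T sends to node R the symbol f (x T) rec,
  where rec is the list of symbols T has received in earlier steps (in order).\<close>

type_synonym input = "nat \<Rightarrow> nat"
type_synonym step = "nat \<times> nat \<times> (nat \<Rightarrow> nat list \<Rightarrow> nat)"
type_synonym protocol = "step list"

definition inputs :: "nat \<Rightarrow> nat \<Rightarrow> input set" where
  "inputs n M = ({1..n} \<rightarrow>\<^sub>E {1..M})"

definition step_T :: "step \<Rightarrow> nat" where "step_T s = fst s"
definition step_R :: "step \<Rightarrow> nat" where "step_R s = fst (snd s)"
definition step_f :: "step \<Rightarrow> nat \<Rightarrow> nat list \<Rightarrow> nat" where "step_f s = snd (snd s)"

definition received :: "nat \<Rightarrow> (step \<times> nat) list \<Rightarrow> nat list" where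
  "received i hist = map snd (filter (\<lambda>p. step_R (fst p) = i) hist)"

fun exec :: "protocol \<Rightarrow> (step \<times> nat) list \<Rightarrow> input \<Rightarrow> (step \<times> nat) list" where
  "exec [] hist x = hist"
| "exec (s # ss) hist x =
     exec ss (hist @ [(s, step_f s (x (step_T s)) (received (step_T s) hist))]) x"

definition trace :: "protocol \<Rightarrow> input \<Rightarrow> (step \<times> nat) list" where
  "trace P x = exec P [] x"

text \<open>Symbol sent in step l (0-based) on input x.\<close>
definition sym :: "protocol \<Rightarrow> input \<Rightarrow> nat \<Rightarrow> nat" where
  "sym P x l = snd (trace P x ! l)"

definition valid_protocol :: "nat \<Rightarrow> protocol \<Rightarrow> bool" where
  "valid_protocol n P \<longleftrightarrow> (\<forall>s \<in> set P. step_T s \<in> {1..n} \<and> step_R s \<in> {1..n} \<and> step_T s \<noteq> step_R s)"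

definition S_count :: "nat \<Rightarrow> nat \<Rightarrow> protocol \<Rightarrow> nat \<Rightarrow> nat" where
  "S_count n M P l = card ((\<lambda>x. sym P x l) ` inputs n M)"

definition complexity :: "nat \<Rightarrow> nat \<Rightarrow> protocol \<Rightarrow> real" where
  "complexity n M P = (\<Sum>l<length P. log 2 (real (S_count n M P l)))"

text \<open>Output of node i: out i (x i) (symbols received by i); True means EQ_i = 1.\<close>
definition solves_MEQ_AD :: "nat \<Rightarrow> nat \<Rightarrow> protocol \<Rightarrow> (nat \<Rightarrow> nat \<Rightarrow> nat list \<Rightarrow> bool) \<Rightarrow> bool" where
  "solves_MEQ_AD n M P out \<longleftrightarrow> valid_protocol n P \<and>
     (\<forall>x \<in> inputs n M.
        (\<forall>i\<in>{1..n}. \<not> out i (x i) (received i (trace P x)))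
        \<longleftrightarrow> (\<forall>i\<in>{1..n}. \<forall>j\<in>{1..n}. x i = x j))"

definition C_AD :: "nat \<Rightarrow> nat \<Rightarrow> real" where
  "C_AD n M = Inf {complexity n M P | P. \<exists>out. solves_MEQ_AD n M P out}"

end

theory Submission
  imports Defs
begin

text \<open>Write each input minus one in base 6 with \<open>h\<close> digits and run, for every digit
  position, one round of messages around the ring 1 \<rightarrow> 2 \<rightarrow> 3 \<rightarrow> 1, each node sending a
  ternary label of its digit to the next node, which compares it with the label of its own digit.
  The three labellings of the six digits are chosen so that agreement along all three edges of
  the cycle forces the three digits to be equal; hence all nodes accept iff the inputs agree in
  every digit. Each of the \<open>3h\<close> steps takes exactly three values, giving complexity
  \<open>3h log\<^sub>2 3 = h log\<^sub>2 27\<close>, and any solving protocol bounds the infimum \<open>C_AD\<close>.\<close>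

lemma log_of_nat_nonneg: "0 \<le> log 2 (real n)"
  by (cases "n = 0") (auto simp: log_def)

lemma complexity_nonneg: "0 \<le> complexity n M P"
  unfolding complexity_def by (intro sum_nonneg) (rule log_of_nat_nonneg)

lemma C_AD_le_complexity:
  assumes "solves_MEQ_AD n M P out"
  shows "C_AD n M \<le> complexity n M P"
  unfolding C_AD_def
proof (rule cInf_lower)
  show "complexity n M P \<in> {complexity n M P |P. \<exists>out. solves_MEQ_AD n M P out}"
    using assms by blast
  show "bdd_below {complexity n M P |P. \<exists>out. solves_MEQ_AD n M P out}"
    by (rule bdd_belowI[of _ 0]) (auto intro: complexity_nonneg)
qed

lemma exec_oblivious:
  assumes "\<forall>s\<in>set P. \<forall>v r. step_f s v r = step_f s v []"
  shows "exec P hist x = hist @ map (\<lambda>s. (s, step_f s (x (step_T s)) [])) P"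
  using assms
proof (induction P arbitrary: hist)
  case Nil
  then show ?case by simp
next
  case (Cons s P)
  have oblivious_s: "step_f s (x (step_T s)) (received (step_T s) hist) = step_f s (x (step_T s)) []"
    using Cons.prems by (meson list.set_intros(1))
  have "\<forall>s\<in>set P. \<forall>v r. step_f s v r = step_f s v []"
    using Cons.prems by (meson list.set_intros(2))
  then show ?case
    by (simp only: exec.simps oblivious_s Cons.IH) simp
qed

lemma image_inputs_coordinate:
  assumes "i \<in> {1..n}" "1 \<le> M"
  shows "(\<lambda>x. g (x i)) ` inputs n M = g ` {1..M}"
proof -
  have "inputs n M \<noteq> {}"
    using assms(2) by (auto simp: inputs_def PiE_eq_empty_iff)
  then have "(\<lambda>x. x i) ` inputs n M = {1..M}"
    using assms(1) by (simp add: inputs_def image_projection_PiE)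
  then show ?thesis
    by (metis image_image)
qed

lemma eq_if_digits_eq:
  fixes a c b :: nat
  assumes "a < b ^ h" and "c < b ^ h"
    and "\<forall>k<h. a div b ^ k mod b = c div b ^ k mod b"
  shows "a = c"
  using assms
proof (induction h arbitrary: a c)
  case 0
  then show ?case by simp
next
  case (Suc h)
  have "a div b = c div b"
  proof (rule Suc.IH)
    show "a div b < b ^ h" "c div b < b ^ h"
      using Suc.prems(1,2) by (simp_all add: less_mult_imp_div_less mult.commute)
    show "\<forall>k<h. a div b div b ^ k mod b = c div b div b ^ k mod b"
    proof (intro allI impI)
      fix k assume "k < h"
      then have "a div b ^ Suc k mod b = c div b ^ Suc k mod b"
        using Suc.prems(3) by blast
      then show "a div b div b ^ k mod b = c div b div b ^ k mod b"
        by (simp add: div_mult2_eq)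
    qed
  qed
  moreover have "a mod b = c mod b"
    using Suc.prems(3)[rule_format, of 0] by simp
  ultimately show ?case
    by (metis div_mult_mod_eq)
qed

lemma all_less_mult_iff:
  fixes m h :: nat
  shows "(\<forall>l<m * h. P l) \<longleftrightarrow> (\<forall>k<h. \<forall>j<m. P (m * k + j))"
proof (intro iffI allI impI)
  fix k j assume "\<forall>l<m * h. P l" "k < h" "j < m"
  moreover have "m * k + j < m * h"
  proof -
    have "m * k + j < m * Suc k"
      using \<open>j < m\<close> by simp
    also have "\<dots> \<le> m * h"
      using \<open>k < h\<close> by (intro mult_le_mono2) simp
    finally show ?thesis .
  qed
  ultimately show "P (m * k + j)" by blast
next
  fix l assume H: "\<forall>k<h. \<forall>j<m. P (m * k + j)" and "l < m * h"
  then have "0 < m"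
    by (cases m) simp_all
  with \<open>l < m * h\<close> have "l div m < h" "l mod m < m"
    by (simp_all add: less_mult_imp_div_less mult.commute)
  then have "P (m * (l div m) + l mod m)"
    using H by blast
  then show "P l"
    by simp
qed

lemma all_less_3_iff: "(\<forall>j<3::nat. Q j) \<longleftrightarrow> Q 0 \<and> Q 1 \<and> Q 2"
proof
  assume "Q 0 \<and> Q 1 \<and> Q 2"
  moreover have "j = 0 \<or> j = 1 \<or> j = 2" if "j < 3" for j :: nat
    using that by arith
  ultimately show "\<forall>j<3. Q j"
    by blast
qed simp

definition label :: "nat \<Rightarrow> nat \<Rightarrow> nat" where
  "label j d = [[0,0,1,1,2,2],[0,1,0,2,1,2],[0,1,2,1,2,0::nat]] ! j ! d"

lemma label_cycle_eq:
  assumes "a < 6" "b < 6" "c < 6"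
    and "label 0 a = label 0 b" "label 1 b = label 1 c" "label 2 c = label 2 a"
  shows "a = b \<and> b = c"
  using assms by (simp add: label_def less_Suc_eq numeral_eq_Suc) (elim disjE; simp)

lemma image_label: "j < 3 \<Longrightarrow> label j ` {..<6} = {0, 1, 2}"
  by (auto simp: label_def less_Suc_eq numeral_eq_Suc lessThan_Suc)

definition digit :: "nat \<Rightarrow> nat \<Rightarrow> nat" where
  "digit k v = (v - 1) div 6 ^ k mod 6"

lemma digit_less: "digit k v < 6"
  by (simp add: digit_def)

lemma image_digit:
  assumes "k < h"
  shows "digit k ` {1..6 ^ h} = {..<6}"
proof
  show "digit k ` {1..6 ^ h} \<subseteq> {..<6}"
    by (auto simp: digit_def)
  show "{..<6} \<subseteq> digit k ` {1..6 ^ h}"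
  proof
    fix d :: nat assume "d \<in> {..<6}"
    then have "d * 6 ^ k < 6 * 6 ^ k"
      by simp
    also have "\<dots> \<le> 6 ^ h"
      using assms power_increasing[of "Suc k" h "6::nat"] by simp
    finally have "d * 6 ^ k < 6 ^ h" .
    then show "d \<in> digit k ` {1..6 ^ h}"
      using \<open>d \<in> {..<6}\<close> by (intro image_eqI[of _ _ "1 + d * 6 ^ k"]) (auto simp: digit_def)
  qed
qed

lemma digit_eq_iff:
  assumes "a \<in> {1..6 ^ h}" "b \<in> {1..6 ^ h}"
  shows "(\<forall>k<h. digit k a = digit k b) \<longleftrightarrow> a = b"
proof
  assume "\<forall>k<h. digit k a = digit k b"
  moreover have "a - 1 < 6 ^ h" "b - 1 < 6 ^ h"
    using assms by auto
  ultimately have "a - 1 = b - 1"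
    by (intro eq_if_digits_eq[of _ 6 h]) (auto simp: digit_def)
  then show "a = b"
    using assms by auto
qed simp

definition ring_next :: "nat \<Rightarrow> nat" where
  "ring_next i = i mod 3 + 1"

definition ring_msg :: "nat \<Rightarrow> nat \<Rightarrow> nat" where
  "ring_msg l v = label (l mod 3) (digit (l div 3) v)"

definition ring_step :: "nat \<Rightarrow> step" where
  "ring_step l = (ring_next l, ring_next (ring_next l), \<lambda>v _. ring_msg l v)"

definition ring_protocol :: "nat \<Rightarrow> protocol" where
  "ring_protocol h = map ring_step [0..<3 * h]"

definition ring_output :: "nat \<Rightarrow> nat \<Rightarrow> nat \<Rightarrow> nat list \<Rightarrow> bool" where
  "ring_output h i v rec \<longleftrightarrow>
     rec \<noteq> map (\<lambda>l. ring_msg l v) (filter (\<lambda>l. ring_next (ring_next l) = i) [0..<3 * h])"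

lemma ring_next_mem: "ring_next i \<in> {1..3}"
  by (simp add: ring_next_def)

lemma trace_ring_protocol:
  "trace (ring_protocol h) x = map (\<lambda>l. (ring_step l, ring_msg l (x (ring_next l)))) [0..<3 * h]"
  unfolding trace_def
  by (subst exec_oblivious) (auto simp: ring_protocol_def ring_step_def step_f_def step_T_def)

lemma received_ring_protocol:
  "received i (trace (ring_protocol h) x) =
     map (\<lambda>l. ring_msg l (x (ring_next l))) (filter (\<lambda>l. ring_next (ring_next l) = i) [0..<3 * h])"
  by (simp add: received_def trace_ring_protocol filter_map o_def ring_step_def step_R_def)

lemma valid_ring_protocol: "valid_protocol 3 (ring_protocol h)"
proof -
  have "ring_next l \<noteq> ring_next (ring_next l)" for l
    by (simp add: ring_next_def) presburger
  then show ?thesis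
    by (auto simp: valid_protocol_def ring_protocol_def ring_step_def step_T_def step_R_def ring_next_def)
qed

lemma S_count_ring_protocol:
  assumes "l < 3 * h"
  shows "S_count 3 (6 ^ h) (ring_protocol h) l = 3"
proof -
  have "(\<lambda>x. sym (ring_protocol h) x l) ` inputs 3 (6 ^ h)
      = (\<lambda>x. ring_msg l (x (ring_next l))) ` inputs 3 (6 ^ h)"
    using assms by (simp add: sym_def trace_ring_protocol)
  also have "\<dots> = ring_msg l ` {1..6 ^ h}"
    by (rule image_inputs_coordinate[OF ring_next_mem]) simp
  also have "\<dots> = label (l mod 3) ` digit (l div 3) ` {1..6 ^ h}"
    by (simp add: ring_msg_def image_image)
  also have "\<dots> = {0, 1, 2}"
  proof -
    have "l div 3 < h"
      using assms by linarith
    then have "digit (l div 3) ` {1..6 ^ h} = {..<6}"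
      by (rule image_digit)
    moreover have "label (l mod 3) ` {..<6} = {0, 1, 2}"
      by (simp add: image_label)
    ultimately show ?thesis
      by (simp only:)
  qed
  finally show ?thesis
    by (simp add: S_count_def)
qed

lemma complexity_ring_protocol: "complexity 3 (6 ^ h) (ring_protocol h) = real h * log 2 27"
proof -
  have "length (ring_protocol h) = 3 * h"
    by (simp add: ring_protocol_def)
  then have "complexity 3 (6 ^ h) (ring_protocol h) = (\<Sum>l<3 * h. log 2 3)"
    unfolding complexity_def by (intro sum.cong) (simp_all add: S_count_ring_protocol)
  also have "\<dots> = real h * (3 * log 2 3)"
    by simp
  also have "3 * log 2 3 = log 2 (3 ^ 3)"
    by (subst log_nat_power) auto
  finally show ?thesis
    by simp
qed

lemma ring_node_accepts_iff:
  "\<not> ring_output h i (x i) (received i (trace (ring_protocol h) x))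
     \<longleftrightarrow> (\<forall>l<3 * h. ring_next (ring_next l) = i \<longrightarrow> ring_msg l (x (ring_next l)) = ring_msg l (x i))"
  by (auto simp: ring_output_def received_ring_protocol)

lemma ring_protocol_accepts_iff:
  "(\<forall>i\<in>{1..3}. \<not> ring_output h i (x i) (received i (trace (ring_protocol h) x)))
     \<longleftrightarrow> (\<forall>l<3 * h. ring_msg l (x (ring_next l)) = ring_msg l (x (ring_next (ring_next l))))"
  unfolding ring_node_accepts_iff using ring_next_mem by blast

lemma ring_msgs_agree_iff:
  "(\<forall>l<3 * h. ring_msg l (x (ring_next l)) = ring_msg l (x (ring_next (ring_next l))))
     \<longleftrightarrow> (\<forall>k<h. digit k (x 1) = digit k (x 2) \<and> digit k (x 2) = digit k (x 3))"
proof -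
  have "ring_msg (3 * k + j) v = label j (digit k v) \<and> ring_next (3 * k + j) = j + 1"
    if "j < 3" for j k v
    using that by (simp add: ring_msg_def ring_next_def)
  from this[of 0] this[of 1] this[of 2]
  have round: "ring_msg (3 * k + 0) v = label 0 (digit k v)" "ring_next (3 * k + 0) = 1"
    "ring_msg (3 * k + 1) v = label 1 (digit k v)" "ring_next (3 * k + 1) = 2"
    "ring_msg (3 * k + 2) v = label 2 (digit k v)" "ring_next (3 * k + 2) = 3" for k v
    by simp_all
  have next_node: "ring_next 1 = 2" "ring_next 2 = 3" "ring_next 3 = 1"
    by (simp_all add: ring_next_def)
  have "(\<forall>l<3 * h. ring_msg l (x (ring_next l)) = ring_msg l (x (ring_next (ring_next l))))
     \<longleftrightarrow> (\<forall>k<h. label 0 (digit k (x 1)) = label 0 (digit k (x 2))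
                \<and> label 1 (digit k (x 2)) = label 1 (digit k (x 3))
                \<and> label 2 (digit k (x 3)) = label 2 (digit k (x 1)))"
    unfolding all_less_mult_iff[where m = 3] all_less_3_iff
    by (simp only: round next_node)
  also have "\<dots> \<longleftrightarrow> (\<forall>k<h. digit k (x 1) = digit k (x 2) \<and> digit k (x 2) = digit k (x 3))"
    using label_cycle_eq[OF digit_less digit_less digit_less] by auto
  finally show ?thesis .
qed

lemma solves_ring_protocol: "solves_MEQ_AD 3 (6 ^ h) (ring_protocol h) (ring_output h)"
  unfolding solves_MEQ_AD_def
proof (intro conjI valid_ring_protocol ballI)
  fix x assume "x \<in> inputs 3 (6 ^ h)"
  then have "x 1 \<in> {1..6 ^ h}" "x 2 \<in> {1..6 ^ h}" "x 3 \<in> {1..6 ^ h}"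
    by (auto simp: inputs_def)
  then have "(\<forall>k<h. digit k (x 1) = digit k (x 2) \<and> digit k (x 2) = digit k (x 3))
      \<longleftrightarrow> x 1 = x 2 \<and> x 2 = x 3"
    using digit_eq_iff by blast
  moreover have "(\<forall>i\<in>{1..3::nat}. \<forall>j\<in>{1..3}. x i = x j) \<longleftrightarrow> x 1 = x 2 \<and> x 2 = x 3"
    by (auto simp: le_Suc_eq numeral_eq_Suc)
  ultimately show "(\<forall>i\<in>{1..3}. \<not> ring_output h i (x i) (received i (trace (ring_protocol h) x)))
      \<longleftrightarrow> (\<forall>i\<in>{1..3}. \<forall>j\<in>{1..3}. x i = x j)"
    by (simp only: ring_protocol_accepts_iff ring_msgs_agree_iff)
qed

theorem mainTheorem10:
  fixes h :: nat
  assumes "h \<ge> 1"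
  shows "(\<exists>P out. solves_MEQ_AD 3 (6 ^ h) P out \<and> complexity 3 (6 ^ h) P = real h * log 2 27)
         \<and> C_AD 3 (6 ^ h) \<le> real h * log 2 27"
proof -
  have solves: "solves_MEQ_AD 3 (6 ^ h) (ring_protocol h) (ring_output h)"
    by (rule solves_ring_protocol)
  then have "C_AD 3 (6 ^ h) \<le> complexity 3 (6 ^ h) (ring_protocol h)"
    by (rule C_AD_le_complexity)
  with solves show ?thesis
    using complexity_ring_protocol by auto
qed

end
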